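(* Let $\kappa\ge1$, $n\ge1$ be integers and $0<\epsilon<1$. Let $\mathcal{C}=\{q\in\mathbb{R}^{2^\kappa}: q_i\ge0\ \forall i,\ \sum_{i=0}^{2^\kappa-1}q_i=1\}$. If $q\in\mathcal{C}$ is a local minimizer of $q\mapsto\lambda(n,\epsilon,q)$ on $\mathcal{C}$, then $q_0=0$.
   Context: $W=\mathbb{F}_2^\kappa$; $\nu(i)\in W$ is the binary expansion of $i\in\{0,\dots,2^\kappa-1\}$; vectors $q$ are indexed $q_0,\dots,q_{2^\kappa-1}$. For a subspace $S\subseteq W$, $\zeta(S,q)=\sum_{i:\nu(i)\in S}q_i$; $\Xi(W,\kappa-1)$ is the set of $(\kappa-1)$-dimensional subspaces of $W$. For real $q$ define $\lambda(n,\epsilon,q)=(2-\epsilon)^n2^{-\kappa}\Big(1+\sum_{S\in\Xi(W,\kappa-1)}\big(\tfrac{\epsilon}{2-\epsilon}\big)^{n(1-\zeta(S,q))}\Big)-1$ (for $q$ the column-distribution vector of a generator matrix, this is the $\chi^2$ divergence between $p_{MZ}$ and $p_Mp_Z$ for the coset code over a binary erasure channel with erasure probability $\epsilon$). A local minimizer of $f$ on $\mathcal{C}$ is a point $q\in\mathcal{C}$ with $f(q)\le f(q')$ for all $q'\in\mathcal{C}$ in some neighborhood of $q$. *)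

theory Defs
  imports "HOL-Analysis.Analysis"
begin

text \<open>W = F_2^kappa is represented by the naturals below 2^kappa, vector addition
  being bitwise xor; the binary-expansion map nu is then the identity on indices.\<close>

definition W :: "nat \<Rightarrow> nat set" where
  "W \<kappa> = {..<2^\<kappa>}"

definition lin_comb :: "nat list \<Rightarrow> bool list \<Rightarrow> nat" where
  "lin_comb bs cs = foldr (\<lambda>(b, c) acc. if c then Bit_Operations.xor b acc else acc) (zip bs cs) 0"

definition span2 :: "nat list \<Rightarrow> nat set" where
  "span2 bs = {lin_comb bs cs | cs. length cs = length bs}"

definition lin_indep2 :: "nat list \<Rightarrow> bool" where
  "lin_indep2 bs \<longleftrightarrow> (\<forall>cs. length cs = length bs \<longrightarrow> lin_comb bs cs = 0 \<longrightarrow> (\<forall>c\<in>set cs. \<not> c))"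

definition is_subspace :: "nat \<Rightarrow> nat set \<Rightarrow> bool" where
  "is_subspace \<kappa> S \<longleftrightarrow> S \<subseteq> W \<kappa> \<and> 0 \<in> S \<and> (\<forall>x\<in>S. \<forall>y\<in>S. Bit_Operations.xor x y \<in> S)"

definition subspace_dim :: "nat \<Rightarrow> nat \<Rightarrow> nat set \<Rightarrow> bool" where
  "subspace_dim \<kappa> d S \<longleftrightarrow> is_subspace \<kappa> S \<and>
     (\<exists>bs. length bs = d \<and> set bs \<subseteq> S \<and> lin_indep2 bs \<and> span2 bs = S)"

definition Xi :: "nat \<Rightarrow> nat \<Rightarrow> nat set set" where
  "Xi \<kappa> d = {S. subspace_dim \<kappa> d S}"

definition zeta :: "nat set \<Rightarrow> (nat \<Rightarrow> real) \<Rightarrow> real" where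
  "zeta S q = (\<Sum>i\<in>S. q i)"

definition lam :: "nat \<Rightarrow> nat \<Rightarrow> real \<Rightarrow> (nat \<Rightarrow> real) \<Rightarrow> real" where
  "lam \<kappa> n \<epsilon> q = (2 - \<epsilon>) ^ n * 2 powr (- real \<kappa>) *
     (1 + (\<Sum>S\<in>Xi \<kappa> (\<kappa> - 1). (\<epsilon> / (2 - \<epsilon>)) powr (real n * (1 - zeta S q)))) - 1"

definition prob_simplex :: "nat \<Rightarrow> (nat \<Rightarrow> real) set" where
  "prob_simplex \<kappa> = {q. (\<forall>i<2^\<kappa>. q i \<ge> 0) \<and> (\<forall>i\<ge>2^\<kappa>. q i = 0) \<and> (\<Sum>i<2^\<kappa>. q i) = 1}"

text \<open>Local minimizer on a set C, w.r.t. the sup-norm distance on the first N coordinates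
  (all norms on R^N are equivalent).\<close>
definition local_minimizer :: "nat \<Rightarrow> ((nat \<Rightarrow> real) \<Rightarrow> real) \<Rightarrow> (nat \<Rightarrow> real) set \<Rightarrow> (nat \<Rightarrow> real) \<Rightarrow> bool" where
  "local_minimizer N f C q \<longleftrightarrow> q \<in> C \<and>
     (\<exists>\<delta>>0. \<forall>q'\<in>C. (\<forall>i<N. \<bar>q' i - q i\<bar> < \<delta>) \<longrightarrow> f q \<le> f q')"

end

theory Submission
  imports Defs
begin

text \<open>Moving a little mass from coordinate 0 to coordinate 1 decreases \<open>\<zeta>(S, q)\<close> by the
  moved amount for every subspace \<open>S\<close> not containing 1, and leaves it unchanged otherwise,
  because every subspace contains 0. Since \<open>\<epsilon>/(2-\<epsilon>) < 1\<close>, each summand of \<open>\<lambda>\<close> is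
  increasing in \<open>\<zeta>(S, q)\<close>, so no summand grows; the summand of the hyperplane of even
  vectors, which misses 1, strictly shrinks.\<close>

lemma xor_two_power_eq_add:
  fixes x :: nat
  assumes "x < 2 ^ k"
  shows "xor (2 ^ k) x = 2 ^ k + x"
proof -
  have "\<not> bit x k" using assms by (simp add: bit_iff_odd)
  then have "and (2 ^ k) x = 0" by (simp add: and.commute and_exp_eq_0_iff_not_bit)
  then show ?thesis by (simp add: disjunctive_add_eq_xor)
qed

lemma xor_less_two_power:
  fixes x y :: nat
  shows "x < 2 ^ k \<Longrightarrow> y < 2 ^ k \<Longrightarrow> xor x y < 2 ^ k"
  by (metis XOR_upper int_eq_iff nat_int_comparison(2)
      numeral_power_eq_nat_cancel_iff of_nat_xor_eq)

lemma lin_comb_Nil [simp]: "lin_comb [] cs = 0"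
  by (simp add: lin_comb_def)

lemma lin_comb_Cons [simp]:
  "lin_comb (b # bs) (c # cs) = (if c then xor b (lin_comb bs cs) else lin_comb bs cs)"
  by (simp add: lin_comb_def)

fun even_basis :: "nat \<Rightarrow> nat list" where
  "even_basis 0 = []"
| "even_basis (Suc m) = 2 ^ Suc m # even_basis m"

lemma length_even_basis [simp]: "length (even_basis m) = m"
  by (induction m) auto

lemma set_even_basis: "set (even_basis m) \<subseteq> {x. even x \<and> x < 2 ^ Suc m}"
  by (induction m) auto

lemma lin_comb_even_basis:
  "length cs = m \<Longrightarrow> even (lin_comb (even_basis m) cs) \<and> lin_comb (even_basis m) cs < 2 ^ Suc m"
proof (induction m arbitrary: cs)
  case 0
  then show ?case by simp
next
  case (Suc m)
  then obtain c cs' where cs: "cs = c # cs'" "length cs' = m" by (cases cs) auto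
  with Suc.IH have "even (lin_comb (even_basis m) cs')" "lin_comb (even_basis m) cs' < 2 ^ Suc m"
    by auto
  moreover from this have
    "xor (2 * 2 ^ m) (lin_comb (even_basis m) cs') = 2 * 2 ^ m + lin_comb (even_basis m) cs'"
    by (metis xor_two_power_eq_add power_Suc)
  ultimately show ?case by (auto simp: cs)
qed

lemma lin_indep2_even_basis: "lin_indep2 (even_basis m)"
  unfolding lin_indep2_def
proof (induction m)
  case 0
  then show ?case by simp
next
  case (Suc m)
  show ?case
  proof (intro allI impI)
    fix cs assume len: "length cs = length (even_basis (Suc m))"
      and zero: "lin_comb (even_basis (Suc m)) cs = 0"
    then obtain c cs' where cs: "cs = c # cs'" "length cs' = m" by (cases cs) auto
    have "lin_comb (even_basis m) cs' < 2 ^ Suc m"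
      using lin_comb_even_basis[OF cs(2)] by simp
    then have
      "xor (2 * 2 ^ m) (lin_comb (even_basis m) cs') = 2 * 2 ^ m + lin_comb (even_basis m) cs'"
      by (metis xor_two_power_eq_add power_Suc)
    with zero have "\<not> c" and "lin_comb (even_basis m) cs' = 0"
      by (auto simp: cs split: if_splits)
    with Suc.IH cs show "\<forall>c\<in>set cs. \<not> c" by auto
  qed
qed

lemma even_in_span2_even_basis:
  "even x \<Longrightarrow> x < 2 ^ Suc m \<Longrightarrow> \<exists>cs. length cs = m \<and> lin_comb (even_basis m) cs = x"
proof (induction m arbitrary: x)
  case 0
  then have "x < 2" by simp
  with 0 have "x = 0" by presburger
  then show ?case by simp
next
  case (Suc m)
  show ?case
  proof (cases "x < 2 ^ Suc m")
    case True
    with Suc obtain cs where "length cs = m" "lin_comb (even_basis m) cs = x" by blast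
    then show ?thesis by (intro exI[of _ "False # cs"]) simp
  next
    case False
    with Suc.prems have "even (x - 2 ^ Suc m)" "x - 2 ^ Suc m < 2 ^ Suc m" by auto
    with Suc.IH obtain cs
      where cs: "length cs = m" "lin_comb (even_basis m) cs = x - 2 ^ Suc m" by blast
    then have "lin_comb (even_basis m) cs < 2 ^ Suc m"
      using lin_comb_even_basis by blast
    then have
      "xor (2 * 2 ^ m) (lin_comb (even_basis m) cs) = 2 * 2 ^ m + lin_comb (even_basis m) cs"
      by (metis xor_two_power_eq_add power_Suc)
    with cs False show ?thesis by (intro exI[of _ "True # cs"]) simp
  qed
qed

lemma span2_even_basis: "span2 (even_basis m) = {x. even x \<and> x < 2 ^ Suc m}"
  using lin_comb_even_basis even_in_span2_even_basis unfolding span2_def by fastforce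

lemma even_hyperplane_mem_Xi:
  assumes "\<kappa> \<ge> 1"
  shows "{x. even x \<and> x < 2 ^ \<kappa>} \<in> Xi \<kappa> (\<kappa> - 1)"
proof -
  have \<kappa>: "\<kappa> = Suc (\<kappa> - 1)" using assms by simp
  have "is_subspace \<kappa> {x. even x \<and> x < 2 ^ \<kappa>}"
    by (auto simp: is_subspace_def W_def even_xor_iff intro: xor_less_two_power)
  moreover have "span2 (even_basis (\<kappa> - 1)) = {x. even x \<and> x < 2 ^ \<kappa>}"
    "set (even_basis (\<kappa> - 1)) \<subseteq> {x. even x \<and> x < 2 ^ \<kappa>}"
    using span2_even_basis set_even_basis \<kappa> by metis+
  ultimately show ?thesis
    unfolding Xi_def subspace_dim_def
    using lin_indep2_even_basis length_even_basis by blast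
qed

lemma finite_Xi: "finite (Xi \<kappa> d)"
proof (rule finite_subset)
  show "Xi \<kappa> d \<subseteq> Pow (W \<kappa>)" by (auto simp: Xi_def subspace_dim_def is_subspace_def)
qed (simp add: W_def)

lemma mem_Xi_D:
  assumes "S \<in> Xi \<kappa> d"
  shows "finite S" and "0 \<in> S"
  using assms finite_subset[of S "W \<kappa>"]
  by (auto simp: Xi_def subspace_dim_def is_subspace_def W_def)

lemma lam_strict_mono_zeta:
  assumes "n \<ge> 1" and "0 < \<epsilon>" and "\<epsilon> < 1"
    and le: "\<And>S. S \<in> Xi \<kappa> (\<kappa> - 1) \<Longrightarrow> zeta S q' \<le> zeta S q"
    and H: "H \<in> Xi \<kappa> (\<kappa> - 1)" and less: "zeta H q' < zeta H q"
  shows "lam \<kappa> n \<epsilon> q' < lam \<kappa> n \<epsilon> q"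
proof -
  define c where "c = \<epsilon> / (2 - \<epsilon>)"
  have c: "0 < c" "c < 1" using assms(2,3) by (auto simp: c_def field_simps)
  have "(\<Sum>S\<in>Xi \<kappa> (\<kappa> - 1). c powr (real n * (1 - zeta S q')))
      < (\<Sum>S\<in>Xi \<kappa> (\<kappa> - 1). c powr (real n * (1 - zeta S q)))"
  proof (rule sum_strict_mono_ex1[OF finite_Xi])
    show "\<forall>S\<in>Xi \<kappa> (\<kappa> - 1). c powr (real n * (1 - zeta S q')) \<le> c powr (real n * (1 - zeta S q))"
      using le c by (auto intro!: powr_mono' mult_left_mono)
    show "\<exists>S\<in>Xi \<kappa> (\<kappa> - 1). c powr (real n * (1 - zeta S q')) < c powr (real n * (1 - zeta S q))"
      using H less c \<open>n \<ge> 1\<close> by (intro bexI[OF _ H] powr_less_mono') auto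
  qed
  moreover have "(2 - \<epsilon>) ^ n * 2 powr (- real \<kappa>) > 0" using assms(3) by simp
  ultimately show ?thesis
    unfolding lam_def c_def
    by (intro diff_strict_right_mono mult_strict_left_mono add_strict_left_mono)
qed

definition shift_mass :: "nat \<Rightarrow> nat \<Rightarrow> real \<Rightarrow> (nat \<Rightarrow> real) \<Rightarrow> nat \<Rightarrow> real" where
  "shift_mass i j t q = q(i := q i - t, j := q j + t)"

lemma sum_shift_mass:
  assumes "finite S" and "i \<noteq> j"
  shows "sum (shift_mass i j t q) S
    = sum q S - (if i \<in> S then t else 0) + (if j \<in> S then t else 0)"
proof -
  have "sum (shift_mass i j t q) S
      = (\<Sum>k\<in>S. q k + ((if k = i then - t else 0) + (if k = j then t else 0)))"
    using assms(2) by (intro sum.cong) (auto simp: shift_mass_def)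
  also have "\<dots> = sum q S - (if i \<in> S then t else 0) + (if j \<in> S then t else 0)"
    using assms(1) by (simp add: sum.distrib sum.delta')
  finally show ?thesis .
qed

lemma shift_mass_mem_prob_simplex:
  assumes "q \<in> prob_simplex \<kappa>" and "i < 2 ^ \<kappa>" "j < 2 ^ \<kappa>" "i \<noteq> j"
    and "0 \<le> t" "t \<le> q i"
  shows "shift_mass i j t q \<in> prob_simplex \<kappa>"
  using assms sum_shift_mass[of "{..<2 ^ \<kappa>}" i j t q]
  by (auto simp: prob_simplex_def shift_mass_def)

theorem theorem6:
  fixes \<kappa> n :: nat and \<epsilon> :: real and q :: "nat \<Rightarrow> real"
  assumes "\<kappa> \<ge> 1" and "n \<ge> 1" and "0 < \<epsilon>" and "\<epsilon> < 1"
    and "local_minimizer (2^\<kappa>) (lam \<kappa> n \<epsilon>) (prob_simplex \<kappa>) q"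
  shows "q 0 = 0"
proof (rule ccontr)
  assume "q 0 \<noteq> 0"
  obtain \<delta> where "\<delta> > 0" and q: "q \<in> prob_simplex \<kappa>" and min:
    "\<And>q'. q' \<in> prob_simplex \<kappa> \<Longrightarrow> \<forall>i<2^\<kappa>. \<bar>q' i - q i\<bar> < \<delta> \<Longrightarrow> lam \<kappa> n \<epsilon> q \<le> lam \<kappa> n \<epsilon> q'"
    using assms(5) unfolding local_minimizer_def by blast
  have "1 < (2::nat) ^ \<kappa>" using one_less_power[of "2::nat" \<kappa>] assms(1) by simp
  with q \<open>q 0 \<noteq> 0\<close> have "q 0 > 0" by (force simp: prob_simplex_def)
  define t where "t = min (q 0) (\<delta> / 2)"
  have t: "0 < t" "t \<le> q 0" "t < \<delta>" using \<open>q 0 > 0\<close> \<open>\<delta> > 0\<close> by (auto simp: t_def)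
  define q' where "q' = shift_mass 0 1 t q"
  have "q' \<in> prob_simplex \<kappa>"
    unfolding q'_def using shift_mass_mem_prob_simplex q \<open>1 < 2 ^ \<kappa>\<close> t by simp
  moreover have "\<forall>i<2^\<kappa>. \<bar>q' i - q i\<bar> < \<delta>" using t by (simp add: q'_def shift_mass_def)
  ultimately have "lam \<kappa> n \<epsilon> q \<le> lam \<kappa> n \<epsilon> q'" by (rule min)
  moreover have "lam \<kappa> n \<epsilon> q' < lam \<kappa> n \<epsilon> q"
  proof (rule lam_strict_mono_zeta[OF assms(2-4) _ even_hyperplane_mem_Xi[OF assms(1)]])
    show "zeta S q' \<le> zeta S q" if "S \<in> Xi \<kappa> (\<kappa> - 1)" for S
      using mem_Xi_D[OF that] sum_shift_mass[of S 0 1 t q] t by (simp add: zeta_def q'_def)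
    show "zeta {x. even x \<and> x < 2 ^ \<kappa>} q' < zeta {x. even x \<and> x < 2 ^ \<kappa>} q"
      using sum_shift_mass[of "{x. even x \<and> x < 2 ^ \<kappa>}" 0 1 t q] t
      by (simp add: zeta_def q'_def)
  qed
  ultimately show False by simp
qed

end
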